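(* Let $G=(V,E)$ be a strongly connected digraph and $s\in V$. Let $e=(u,v)\in E$ with $T(u)\neq T(v)$, and let $r_v$ be the root of $T(v)$. Then either $u=d(v)$ and $e$ is a bridge of $G(s)$, or $u$ is a proper descendant of $r_v$ in $D(s)$.
   Context: For a digraph $G=(V,E)$ and $s\in V$ with every vertex reachable from $s$, $G(s)$ is the flow graph with start vertex $s$; $u$ dominates $w$ if every path from $s$ to $w$ contains $u$; the dominator tree $D(s)$ is the rooted tree on $V$ with root $s$ in which $u$ is an ancestor of $w$ iff $u$ dominates $w$; $d(w)$ is the parent of $w\neq s$. An edge $(u,w)$ is a bridge of $G(s)$ if every path from $s$ to $w$ contains it (then $u=d(w)$). A vertex $w\neq s$ is marked if $(d(w),w)$ is a bridge of $G(s)$. Deleting from $D(s)$ all edges $(d(w),w)$ with $w$ marked decomposes $D(s)$ into a forest of subtrees, each rooted at $s$ or at a marked vertex; $T(v)$ denotes the subtree containing $v$, and $r_v$ its root. *)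

theory Defs
  imports Main
begin

definition is_path :: "('a \<times> 'a) set \<Rightarrow> 'a list \<Rightarrow> bool" where
  "is_path E xs \<longleftrightarrow> xs \<noteq> [] \<and> (\<forall>i. Suc i < length xs \<longrightarrow> (xs ! i, xs ! Suc i) \<in> E)"

definition path_from_to :: "('a \<times> 'a) set \<Rightarrow> 'a \<Rightarrow> 'a \<Rightarrow> 'a list \<Rightarrow> bool" where
  "path_from_to E a b xs \<longleftrightarrow> is_path E xs \<and> hd xs = a \<and> last xs = b"

definition digraph :: "'a set \<Rightarrow> ('a \<times> 'a) set \<Rightarrow> bool" where
  "digraph V E \<longleftrightarrow> finite V \<and> E \<subseteq> V \<times> V"

definition strongly_connected :: "'a set \<Rightarrow> ('a \<times> 'a) set \<Rightarrow> bool" where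
  "strongly_connected V E \<longleftrightarrow> (\<forall>a\<in>V. \<forall>b\<in>V. \<exists>xs. path_from_to E a b xs)"

definition dominates :: "'a set \<Rightarrow> ('a \<times> 'a) set \<Rightarrow> 'a \<Rightarrow> 'a \<Rightarrow> 'a \<Rightarrow> bool" where
  "dominates V E s u w \<longleftrightarrow> u \<in> V \<and> w \<in> V \<and> (\<forall>xs. path_from_to E s w xs \<longrightarrow> u \<in> set xs)"

definition strictly_dominates :: "'a set \<Rightarrow> ('a \<times> 'a) set \<Rightarrow> 'a \<Rightarrow> 'a \<Rightarrow> 'a \<Rightarrow> bool" where
  "strictly_dominates V E s u w \<longleftrightarrow> dominates V E s u w \<and> u \<noteq> w"

text \<open>Parent d(w) of w in the dominator tree D(s): the immediate dominator.\<close>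
definition idom :: "'a set \<Rightarrow> ('a \<times> 'a) set \<Rightarrow> 'a \<Rightarrow> 'a \<Rightarrow> 'a" where
  "idom V E s w = (THE u. strictly_dominates V E s u w \<and>
       (\<forall>x. strictly_dominates V E s x w \<longrightarrow> dominates V E s x u))"

definition bridge :: "'a set \<Rightarrow> ('a \<times> 'a) set \<Rightarrow> 'a \<Rightarrow> 'a \<Rightarrow> 'a \<Rightarrow> bool" where
  "bridge V E s u w \<longleftrightarrow> (u, w) \<in> E \<and> w \<in> V \<and>
     (\<forall>xs. path_from_to E s w xs \<longrightarrow>
        (\<exists>i. Suc i < length xs \<and> xs ! i = u \<and> xs ! Suc i = w))"

definition marked :: "'a set \<Rightarrow> ('a \<times> 'a) set \<Rightarrow> 'a \<Rightarrow> 'a \<Rightarrow> bool" where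
  "marked V E s w \<longleftrightarrow> w \<in> V \<and> w \<noteq> s \<and> bridge V E s (idom V E s w) w"

text \<open>Root r_v of the subtree T(v): the deepest ancestor of v in D(s) (v itself included)
  that is s or a marked vertex.\<close>
definition tree_root :: "'a set \<Rightarrow> ('a \<times> 'a) set \<Rightarrow> 'a \<Rightarrow> 'a \<Rightarrow> 'a" where
  "tree_root V E s v = (THE r. dominates V E s r v \<and> (r = s \<or> marked V E s r) \<and>
       (\<forall>y. dominates V E s y v \<and> (y = s \<or> marked V E s y) \<longrightarrow> dominates V E s y r))"

end

theory Submission
  imports Defs
begin

(* Write R for the root r_v of T(v).  The edge (u,v) forces d(v) to dominate u:
   appending v to any path from s to u yields a path to v, which must contain d(v) \<noteq> v.
   If R is a proper dominator of v, then R dominates d(v) and hence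
   u.  If R = v, then either v = s (and s dominates everything) or v is marked, i.e. (d(v),v)
   is a bridge; in that case either u = d(v), or the bridge is met strictly inside every path
   to u, so v dominates u.  Finally u \<noteq> R, because a root is the root of its own subtree
   while T(u) \<noteq> T(v). *)

lemma is_path_successively:
  "is_path E xs \<longleftrightarrow> xs \<noteq> [] \<and> successively (\<lambda>x y. (x, y) \<in> E) xs"
  by (simp add: is_path_def successively_conv_nth)

lemma path_snoc:
  assumes "path_from_to E a b p" "(b, c) \<in> E"
  shows "path_from_to E a c (p @ [c])"
  using assms by (auto simp: path_from_to_def is_path_successively successively_append_iff)

lemma path_prefix:
  assumes "path_from_to E a b (ys @ x # zs)"
  shows "path_from_to E a x (ys @ [x])"
  using assms by (auto simp: path_from_to_def is_path_successively successively_append_iff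
      hd_append successively_Cons split: if_splits)

lemma path_join:
  assumes "path_from_to E a b p" "path_from_to E c d (ys @ b # zs)"
  shows "path_from_to E a d (p @ zs)"
  using assms by (cases zs) (auto simp: path_from_to_def is_path_successively
      successively_append_iff successively_Cons)

locale flow_graph =
  fixes V :: "'a set" and E :: "('a \<times> 'a) set" and s :: 'a
  assumes finite_V: "finite V" and start: "s \<in> V"
    and reachable: "b \<in> V \<Longrightarrow> \<exists>p. path_from_to E s b p"
begin

abbreviation dom :: "'a \<Rightarrow> 'a \<Rightarrow> bool" where
  "dom \<equiv> dominates V E s"

lemma dom_in_V: "dom a b \<Longrightarrow> a \<in> V \<and> b \<in> V"
  unfolding dominates_def by simp

lemma dom_refl: "w \<in> V \<Longrightarrow> dom w w"
  unfolding dominates_def path_from_to_def is_path_def by (metis last_in_set)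

lemma dom_start: "w \<in> V \<Longrightarrow> dom s w"
  unfolding dominates_def path_from_to_def is_path_def using start by (metis hd_in_set)

lemma dom_trans:
  assumes "dom a b" "dom b c" shows "dom a c"
  unfolding dominates_def
proof (intro conjI allI impI)
  show "a \<in> V" "c \<in> V" using assms dom_in_V by auto
  fix p assume p: "path_from_to E s c p"
  then have "b \<in> set p" using assms(2) unfolding dominates_def by blast
  then obtain ys zs where split: "p = ys @ b # zs" by (metis split_list)
  then have "path_from_to E s b (ys @ [b])" using p path_prefix by metis
  then have "a \<in> set (ys @ [b])" using assms(1) unfolding dominates_def by blast
  then show "a \<in> set p" using split by auto
qed

text \<open>Antisymmetry: cut a path to b at the first b; the part before a is a path to a
  avoiding b.\<close>
lemma dom_antisym:
  assumes "dom a b" "dom b a" shows "a = b"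
proof (rule ccontr)
  assume ne: "a \<noteq> b"
  obtain p where p: "path_from_to E s b p" using reachable assms dom_in_V by blast
  then have "b \<in> set p" unfolding path_from_to_def is_path_def by (metis last_in_set)
  then obtain ys zs where split: "p = ys @ b # zs" "b \<notin> set ys" by (metis split_list_first)
  then have to_b: "path_from_to E s b (ys @ [b])" using p path_prefix by metis
  then have "a \<in> set ys" using assms(1) ne unfolding dominates_def by auto
  then obtain ys1 ys2 where ys: "ys = ys1 @ a # ys2" by (metis split_list)
  then have "path_from_to E s a (ys1 @ [a])" using to_b path_prefix[of E s b ys1 a "ys2 @ [b]"]
    by simp
  then have "b \<in> set (ys1 @ [a])" using assms(2) unfolding dominates_def by blast
  then show False using ne split(2) ys by auto
qed

lemma dom_start_only: "dom a s \<Longrightarrow> a = s"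
  using dom_antisym dom_start dom_in_V by blast

lemma not_dom_bypass:
  assumes "path_from_to E s c (ys @ b # zs)" "a \<notin> set zs" "b \<in> V" "\<not> dom a b" "a \<in> V"
  shows "\<not> dom a c"
proof
  assume "dom a c"
  obtain q where q: "path_from_to E s b q" "a \<notin> set q"
    using assms(3-5) unfolding dominates_def by blast
  then have "path_from_to E s c (q @ zs)" using assms(1) path_join by metis
  then have "a \<in> set (q @ zs)" using \<open>dom a c\<close> unfolding dominates_def by blast
  then show False using q(2) assms(2) by simp
qed

text \<open>The dominators of a vertex are totally ordered by dominance: look at the last
  occurrence of a or b on a path to c.\<close>
lemma dom_chain:
  assumes "dom a c" "dom b c" shows "dom a b \<or> dom b a"
proof (rule ccontr)
  assume incomparable: "\<not> (dom a b \<or> dom b a)"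
  have V: "a \<in> V" "b \<in> V" using assms dom_in_V by auto
  obtain p where p: "path_from_to E s c p" using reachable assms dom_in_V by blast
  then have "a \<in> set p" using assms(1) unfolding dominates_def by blast
  then obtain ys x zs where split: "p = ys @ x # zs" "x = a \<or> x = b"
      "\<forall>z\<in>set zs. \<not> (z = a \<or> z = b)"
    using split_list_last_prop[of p "\<lambda>z. z = a \<or> z = b"] by blast
  have avoid: "a \<notin> set zs" "b \<notin> set zs" using split(3) by auto
  show False
  proof (cases "x = b")
    case True
    then show False
      using not_dom_bypass[of c ys b zs a] p split(1) avoid V assms(1) incomparable by simp
  next
    case False
    then show False
      using not_dom_bypass[of c ys a zs b] p split avoid V assms(2) incomparable by simp
  qed
qed

lemma dominators_deepest:
  assumes "finite S" "S \<noteq> {}" "\<forall>x\<in>S. dom x w"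
  shows "\<exists>m\<in>S. \<forall>x\<in>S. dom x m"
  using assms
proof (induction S rule: finite_ne_induct)
  case (singleton x)
  then show ?case using dom_refl dom_in_V by blast
next
  case (insert x F)
  then obtain m where m: "m \<in> F" "\<forall>y\<in>F. dom y m" by auto
  have "dom m x \<or> dom x m" using insert.prems m dom_chain by blast
  then show ?case
  proof
    assume "dom m x"
    then have "\<forall>y\<in>insert x F. dom y x" using m dom_trans dom_refl dom_in_V by blast
    then show ?case by blast
  next
    assume "dom x m"
    then show ?case using m by blast
  qed
qed

text \<open>Among the dominators of w with a property P (if there is one) there is a unique
  deepest one; both d(w) and the root r_w are of this form.\<close>
lemma deepest_dominator_unique:
  assumes "dom x w" "P x"
  shows "\<exists>!m. dom m w \<and> P m \<and> (\<forall>y. dom y w \<and> P y \<longrightarrow> dom y m)"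
proof -
  let ?S = "{x. dom x w \<and> P x}"
  have "finite ?S"
    using finite_V by (rule finite_subset[rotated]) (auto simp: dominates_def)
  then obtain m where m: "m \<in> ?S" "\<forall>y\<in>?S. dom y m"
    using dominators_deepest[of ?S w] assms by blast
  show ?thesis
  proof (rule ex1I[of _ m])
    fix m' assume "dom m' w \<and> P m' \<and> (\<forall>y. dom y w \<and> P y \<longrightarrow> dom y m')"
    then show "m' = m" using m dom_antisym by blast
  qed (use m in auto)
qed

lemma idom_spec:
  assumes "w \<in> V" "w \<noteq> s"
  shows "strictly_dominates V E s (idom V E s w) w \<and>
    (\<forall>x. strictly_dominates V E s x w \<longrightarrow> dom x (idom V E s w))"
proof -
  have "\<exists>!u. strictly_dominates V E s u w \<and>
      (\<forall>x. strictly_dominates V E s x w \<longrightarrow> dom x u)"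
    using deepest_dominator_unique[of s w "\<lambda>x. x \<noteq> w"] dom_start[OF assms(1)] assms(2)
    unfolding strictly_dominates_def by (simp add: conj_assoc)
  then show ?thesis unfolding idom_def by (rule theI')
qed

lemma tree_root_spec:
  assumes "v \<in> V"
  shows "dom (tree_root V E s v) v \<and> (tree_root V E s v = s \<or> marked V E s (tree_root V E s v)) \<and>
     (\<forall>y. dom y v \<and> (y = s \<or> marked V E s y) \<longrightarrow> dom y (tree_root V E s v))"
proof -
  have "\<exists>!r. dom r v \<and> (r = s \<or> marked V E s r) \<and>
      (\<forall>y. dom y v \<and> (y = s \<or> marked V E s y) \<longrightarrow> dom y r)"
    using deepest_dominator_unique[of s v "\<lambda>x. x = s \<or> marked V E s x"] dom_start[OF assms]
    by simp
  then show ?thesis unfolding tree_root_def by (rule theI')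
qed

lemma tree_root_of_root:
  assumes "r = s \<or> marked V E s r"
  shows "tree_root V E s r = r"
proof -
  have r: "r \<in> V" using assms start unfolding marked_def by auto
  then show ?thesis using tree_root_spec[OF r] dom_refl[OF r] assms dom_antisym by blast
qed

lemma idom_dominates_in_neighbour:
  assumes "(u, v) \<in> E" "u \<in> V" "v \<in> V" "v \<noteq> s"
  shows "dom (idom V E s v) u"
  unfolding dominates_def
proof (intro conjI allI impI)
  let ?d = "idom V E s v"
  have d: "dom ?d v" "?d \<noteq> v" using idom_spec[OF assms(3,4)]
    unfolding strictly_dominates_def by auto
  then show "?d \<in> V" using dom_in_V by blast
  show "u \<in> V" by (rule assms(2))
  fix p assume "path_from_to E s u p"
  then have "path_from_to E s v (p @ [v])" using path_snoc assms(1) by metis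
  then have "?d \<in> set (p @ [v])" using d(1) unfolding dominates_def by blast
  then show "?d \<in> set p" using d(2) by simp
qed

text \<open>If v is marked, every in-neighbour u \<noteq> d(v) of v is dominated by v: the bridge
  (d(v),v) lies on every path to v, and on a path to u extended by v it cannot be the last
  edge.\<close>
lemma marked_dominates_in_neighbour:
  assumes "marked V E s v" "(u, v) \<in> E" "u \<in> V" "u \<noteq> idom V E s v"
  shows "dom v u"
  unfolding dominates_def
proof (intro conjI allI impI)
  show "v \<in> V" "u \<in> V" using assms unfolding marked_def by auto
  fix p assume p: "path_from_to E s u p"
  then have "path_from_to E s v (p @ [v])" using path_snoc assms(2) by metis
  then obtain i where i: "Suc i < length (p @ [v])" "(p @ [v]) ! i = idom V E s v"
      "(p @ [v]) ! Suc i = v"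
    using assms(1) unfolding marked_def bridge_def by blast
  have "p \<noteq> []" and last_p: "last p = u" using p unfolding path_from_to_def is_path_def by auto
  show "v \<in> set p"
  proof (cases "Suc i < length p")
    case True
    then show ?thesis using i by (metis nth_append nth_mem)
  next
    case False
    then have "i = length p - 1" using i(1) by simp
    then have "idom V E s v = last p" using i(2) \<open>p \<noteq> []\<close> by (simp add: nth_append last_conv_nth)
    then show ?thesis using last_p assms(4) by simp
  qed
qed

end

theorem mainTheorem6:
  fixes V :: "'a set" and E :: "('a \<times> 'a) set" and s u v :: 'a
  assumes "digraph V E"
    and "strongly_connected V E"
    and "s \<in> V"
    and "(u, v) \<in> E"
    and "tree_root V E s u \<noteq> tree_root V E s v"
  shows "(u = idom V E s v \<and> bridge V E s u v) \<or>
         (dominates V E s (tree_root V E s v) u \<and> u \<noteq> tree_root V E s v)"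
proof -
  interpret flow_graph V E s
    using assms(1-3) unfolding digraph_def strongly_connected_def by unfold_locales auto
  have u: "u \<in> V" and v: "v \<in> V" using assms(1,4) unfolding digraph_def by auto
  define R where "R = tree_root V E s v"
  have R: "dom R v" "R = s \<or> marked V E s R" using tree_root_spec[OF v] R_def by auto
  have "u \<noteq> R" using tree_root_of_root[OF R(2)] assms(5) R_def by auto
  moreover have "(u = idom V E s v \<and> bridge V E s u v) \<or> dom R u"
  proof (cases "R = v")
    case True
    show ?thesis
    proof (cases "R = s")
      case True
      then show ?thesis using dom_start[OF u] by simp
    next
      case False
      then have "marked V E s v" using R(2) \<open>R = v\<close> by simp
      then have "bridge V E s (idom V E s v) v" unfolding marked_def by simp
      moreover have "u \<noteq> idom V E s v \<Longrightarrow> dom v u"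
        using marked_dominates_in_neighbour[OF \<open>marked V E s v\<close> assms(4) u] .
      ultimately show ?thesis using \<open>R = v\<close> by blast
    qed
  next
    case False
    then have "strictly_dominates V E s R v" using R(1) unfolding strictly_dominates_def by simp
    moreover have "v \<noteq> s" using False R(1) dom_start_only by blast
    ultimately have "dom R (idom V E s v)" using idom_spec[OF v] by blast
    then show ?thesis using idom_dominates_in_neighbour[OF assms(4) u v \<open>v \<noteq> s\<close>] dom_trans by blast
  qed
  ultimately show ?thesis unfolding R_def by blast
qed

end
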